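(* Let $X$ be a topological space whose one point compactification $X^*=X\cup\{\infty\}$ is metrizable, and let $T\colon X\to X$ be continuous. Then there exist a compact metrizable space $Z$, a continuous map $S\colon Z\to Z$ and a topological embedding $\iota\colon X\to Z$ with $S\circ\iota=\iota\circ T$ (so that, identifying $X$ with $\iota(X)$ with the induced topology, $T$ is the restriction of $S$). Moreover, the map $\pi\colon Z\to X^*$ given by $\pi(\iota(x))=x$ for $x\in X$ and $\pi(z)=\infty$ for $z\notin\iota(X)$ is continuous. *)

theory Defs
  imports "HOL-Analysis.Analysis"
begin

end

theory Submission
  imports Defs
begin

text \<open>
  Send \<open>x\<close> to its orbit \<open>(T\<^sup>n x)\<^sub>n\<close>, read in the compact metrizable space \<open>(X\<^sup>*)\<^sup>\<nat>\<close>; there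
  \<open>T\<close> becomes the shift, and \<open>Z\<close> is the closure of the set of orbits. The coordinate \<open>0\<close>
  recovers \<open>x\<close>, so the orbit map is an embedding. A point of \<open>Z\<close> whose coordinate \<open>0\<close> is a point
  \<open>x \<in> X\<close> is the orbit of \<open>x\<close>: since \<open>X\<close> is open in \<open>X\<^sup>*\<close> and every \<open>T\<^sup>n\<close> is continuous,
  its other coordinates are limits of \<open>T\<^sup>n\<close> along points converging to \<open>x\<close>, and \<open>X\<^sup>*\<close> is
  Hausdorff. Hence \<open>\<pi>\<close> is just the projection onto coordinate \<open>0\<close>.
\<close>

lemma continuous_map_funpow:
  assumes "continuous_map X X f"
  shows "continuous_map X X (f ^^ n)"
proof (induction n)
  case 0
  then show ?case by (simp add: id_def)
next
  case (Suc n)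
  then show ?case using continuous_map_compose[OF Suc assms] by (simp add: o_def)
qed

lemma embedding_map_of_compose:
  assumes f: "continuous_map X Y f" and p: "continuous_map Y W p"
    and pf: "embedding_map X W (p \<circ> f)"
  shows "embedding_map X Y f"
proof -
  from pf obtain k
    where k: "homeomorphic_maps X (subtopology W ((p \<circ> f) ` topspace X)) (p \<circ> f) k"
    unfolding embedding_map_def homeomorphic_map_maps by blast
  show ?thesis
    unfolding embedding_map_def homeomorphic_map_maps homeomorphic_maps_def
  proof (intro exI[of _ "k \<circ> p"] conjI ballI)
    show "continuous_map X (subtopology Y (f ` topspace X)) f"
      using f by (simp add: continuous_map_in_subtopology)
    have "continuous_map (subtopology Y (f ` topspace X))
            (subtopology W ((p \<circ> f) ` topspace X)) p"
      using p by (auto simp: continuous_map_in_subtopology continuous_map_from_subtopology image_comp)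
    then show "continuous_map (subtopology Y (f ` topspace X)) X (k \<circ> p)"
      using k continuous_map_compose homeomorphic_maps_def by blast
    show "(k \<circ> p) (f x) = x" if "x \<in> topspace X" for x
      using k that by (simp add: homeomorphic_maps_def)
    show "f ((k \<circ> p) y) = y" if "y \<in> topspace (subtopology Y (f ` topspace X))" for y
      using k that by (auto simp: homeomorphic_maps_def)
  qed
qed

lemma embedding_map_componentwise:
  assumes "\<And>i. continuous_map X Y (g i)" and "embedding_map X Y (g k)"
  shows "embedding_map X (product_topology (\<lambda>_. Y) UNIV) (\<lambda>x i. g i x)"
proof (rule embedding_map_of_compose)
  show "continuous_map X (product_topology (\<lambda>_. Y) UNIV) (\<lambda>x i. g i x)"
    using assms(1) by (simp add: continuous_map_componentwise_UNIV)
  show "continuous_map (product_topology (\<lambda>_. Y) UNIV) Y (\<lambda>z. z k)"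
    using continuous_map_product_projection[of k UNIV "\<lambda>_. Y"] by simp
  show "embedding_map X Y ((\<lambda>z. z k) \<circ> (\<lambda>x i. g i x))"
    using assms(2) by (simp add: o_def)
qed

lemma closure_of_componentwise_image_eq_point:
  assumes Y: "Hausdorff_space Y" and g: "\<And>i. continuous_map X Y (g i)"
    and open_k: "open_map X Y (g k)" and inj_k: "inj_on (g k) (topspace X)"
    and z: "z \<in> product_topology (\<lambda>_. Y) UNIV closure_of ((\<lambda>x i. g i x) ` topspace X)"
    and x: "x \<in> topspace X" "z k = g k x"
  shows "z = (\<lambda>i. g i x)"
proof
  fix i
  let ?P = "product_topology (\<lambda>_. Y) UNIV"
  show "z i = g i x"
  proof (rule ccontr)
    assume "z i \<noteq> g i x"
    have zP: "z \<in> topspace ?P"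
      using z in_closure_of by fast
    moreover have "z i \<in> topspace Y"
      using zP by (simp add: PiE_iff)
    moreover have "g i x \<in> topspace Y"
      using continuous_map_image_subset_topspace[OF g] x by blast
    ultimately obtain U V where UV: "openin Y U" "openin Y V" "z i \<in> U" "g i x \<in> V" "disjnt U V"
      using Y \<open>z i \<noteq> g i x\<close> unfolding Hausdorff_space_def by blast
    define W where "W = {y \<in> topspace X. g i y \<in> V}"
    have "openin X W"
      unfolding W_def using openin_continuous_map_preimage[OF g UV(2)] .
    then have "openin Y (g k ` W)"
      using open_k open_map_def by blast
    define N where "N = {w \<in> topspace ?P. w k \<in> g k ` W} \<inter> {w \<in> topspace ?P. w i \<in> U}"
    have proj: "continuous_map ?P Y (\<lambda>w. w j)" for j
      using continuous_map_product_projection[of j UNIV "\<lambda>_. Y"] by simp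
    have "openin ?P N"
      unfolding N_def using \<open>openin Y (g k ` W)\<close> UV(1)
      by (intro openin_Int openin_continuous_map_preimage[OF proj])
    moreover have "z \<in> N"
      using zP x UV(3,4) by (auto simp: N_def W_def)
    ultimately obtain y where y: "y \<in> topspace X" "(\<lambda>i. g i y) \<in> N"
      using z unfolding in_closure_of by blast
    then have "g k y \<in> g k ` W" "g i y \<in> U"
      by (auto simp: N_def)
    then have "g i y \<in> V"
      using inj_k y(1) by (auto simp: W_def inj_on_def)
    with \<open>g i y \<in> U\<close> UV(5) show False
      by (auto simp: disjnt_def)
  qed
qed

definition shift :: "(nat \<Rightarrow> 'a) \<Rightarrow> nat \<Rightarrow> 'a"
  where "shift z = (\<lambda>n. z (Suc n))"

lemma continuous_map_shift:
  "continuous_map (product_topology (\<lambda>_. Y) UNIV) (product_topology (\<lambda>_. Y) UNIV) shift"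
  unfolding continuous_map_componentwise_UNIV shift_def
  by (intro allI continuous_map_product_projection) simp

lemma continuous_map_image_closure_of_invariant:
  assumes "continuous_map X X f" and "f ` S \<subseteq> S"
  shows "f ` (X closure_of S) \<subseteq> X closure_of S"
  by (meson assms closure_of_mono continuous_map_image_closure_subset order_trans)

definition orbit_seq :: "('a \<Rightarrow> 'a) \<Rightarrow> 'a \<Rightarrow> nat \<Rightarrow> 'a option"
  where "orbit_seq T x = (\<lambda>n. Some ((T ^^ n) x))"

abbreviation Alexandroff_power :: "'a topology \<Rightarrow> (nat \<Rightarrow> 'a option) topology"
  where "Alexandroff_power X \<equiv> product_topology (\<lambda>_. Alexandroff_compactification X) UNIV"

definition orbit_closure_space :: "'a topology \<Rightarrow> ('a \<Rightarrow> 'a) \<Rightarrow> (nat \<Rightarrow> 'a option) topology"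
  where "orbit_closure_space X T =
    subtopology (Alexandroff_power X) (Alexandroff_power X closure_of (orbit_seq T ` topspace X))"

lemma shift_orbit_seq: "shift (orbit_seq T x) = orbit_seq T (T x)"
  by (simp add: shift_def orbit_seq_def funpow_swap1)

lemma inj_orbit_seq: "inj (orbit_seq T)"
  by (rule injI) (metis orbit_seq_def funpow_0 option.inject)

lemma continuous_map_orbit_seq_component:
  assumes "continuous_map X X T"
  shows "continuous_map X (Alexandroff_compactification X) (\<lambda>x. Some ((T ^^ n) x))"
  using continuous_map_compose[OF continuous_map_funpow[OF assms] continuous_map_Some]
  by (simp add: o_def)

lemma continuous_map_orbit_seq:
  assumes "continuous_map X X T"
  shows "continuous_map X (Alexandroff_power X) (orbit_seq T)"
  unfolding orbit_seq_def continuous_map_componentwise_UNIV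
  using continuous_map_orbit_seq_component[OF assms] by simp

lemma embedding_map_orbit_seq:
  assumes "continuous_map X X T"
  shows "embedding_map X (Alexandroff_power X) (orbit_seq T)"
  unfolding orbit_seq_def
  using continuous_map_orbit_seq_component[OF assms]
  by (intro embedding_map_componentwise[where k=0]) (simp_all add: embedding_map_Some)

lemma compact_space_orbit_closure_space: "compact_space (orbit_closure_space X T)"
  unfolding orbit_closure_space_def
  by (simp add: closedin_compact_space compact_space_subtopology compact_space_product_topology)

lemma metrizable_space_orbit_closure_space:
  assumes "metrizable_space (Alexandroff_compactification X)"
  shows "metrizable_space (orbit_closure_space X T)"
  using assms unfolding orbit_closure_space_def
  by (intro metrizable_space_subtopology) (simp add: metrizable_space_product_topology)

lemma embedding_map_orbit_closure_space:
  assumes "continuous_map X X T"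
  shows "embedding_map X (orbit_closure_space X T) (orbit_seq T)"
  using embedding_map_orbit_seq[OF assms]
    continuous_map_image_subset_topspace[OF continuous_map_orbit_seq[OF assms]]
  by (simp add: orbit_closure_space_def embedding_map_in_subtopology closure_of_subset)

lemma continuous_map_shift_orbit_closure_space:
  assumes "continuous_map X X T"
  shows "continuous_map (orbit_closure_space X T) (orbit_closure_space X T) shift"
proof -
  let ?K = "Alexandroff_power X closure_of (orbit_seq T ` topspace X)"
  note shift = continuous_map_shift[of "Alexandroff_compactification X"]
  have "shift ` orbit_seq T ` topspace X \<subseteq> orbit_seq T ` topspace X"
    using assms continuous_map_image_subset_topspace by (fastforce simp: shift_orbit_seq)
  then have "shift ` ?K \<subseteq> ?K"
    by (rule continuous_map_image_closure_of_invariant[OF shift])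
  then show ?thesis
    using shift unfolding orbit_closure_space_def
    by (auto simp: continuous_map_in_subtopology continuous_map_from_subtopology)
qed

lemma orbit_closure_zero:
  assumes "Hausdorff_space (Alexandroff_compactification X)" and "continuous_map X X T"
    and z: "z \<in> Alexandroff_power X closure_of (orbit_seq T ` topspace X)"
  shows "z 0 = (if z \<in> orbit_seq T ` topspace X
                then Some (inv_into (topspace X) (orbit_seq T) z) else None)"
proof (cases "z \<in> orbit_seq T ` topspace X")
  case True
  then obtain x where x: "x \<in> topspace X" "z = orbit_seq T x"
    by blast
  then have "inv_into (topspace X) (orbit_seq T) z = x"
    using inv_into_f_f[OF inj_on_subset[OF inj_orbit_seq subset_UNIV] x(1)] by simp
  then show ?thesis
    using x True by (simp add: orbit_seq_def)
next
  case False
  have orbit: "z = orbit_seq T x" if x: "x \<in> topspace X" "z 0 = Some x" for x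
    unfolding orbit_seq_def
  proof (rule closure_of_componentwise_image_eq_point[OF assms(1)
        continuous_map_orbit_seq_component[OF assms(2)], where k=0])
    show "open_map X (Alexandroff_compactification X) (\<lambda>x. Some ((T ^^ 0) x))"
      using open_map_Some by simp
    show "inj_on (\<lambda>x. Some ((T ^^ 0) x)) (topspace X)"
      by (simp add: inj_on_def)
    show "z \<in> Alexandroff_power X closure_of ((\<lambda>x n. Some ((T ^^ n) x)) ` topspace X)"
      using z unfolding orbit_seq_def .
  qed (use x in simp_all)
  have "z \<in> topspace (Alexandroff_power X)"
    using closure_of_subset_topspace z by (rule subsetD)
  then have "z 0 \<in> topspace (Alexandroff_compactification X)"
    by (simp only: topspace_product_topology PiE_iff) blast
  moreover have "z 0 \<notin> Some ` topspace X"
    using orbit False by blast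
  ultimately show ?thesis
    using False by simp
qed

lemma continuous_map_orbit_closure_space_projection:
  assumes "Hausdorff_space (Alexandroff_compactification X)" and "continuous_map X X T"
  shows "continuous_map (orbit_closure_space X T) (Alexandroff_compactification X)
     (\<lambda>z. if z \<in> orbit_seq T ` topspace X then Some (inv_into (topspace X) (orbit_seq T) z) else None)"
proof (rule continuous_map_eq)
  show "continuous_map (orbit_closure_space X T) (Alexandroff_compactification X) (\<lambda>z. z 0)"
    unfolding orbit_closure_space_def
    by (intro continuous_map_from_subtopology continuous_map_product_projection) simp
  show "z 0 = (if z \<in> orbit_seq T ` topspace X
              then Some (inv_into (topspace X) (orbit_seq T) z) else None)"
    if "z \<in> topspace (orbit_closure_space X T)" for z
    using that orbit_closure_zero[OF assms] by (simp add: orbit_closure_space_def)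
qed

theorem lemma2p3:
  fixes X :: "'a topology" and T :: "'a \<Rightarrow> 'a"
  assumes "metrizable_space (Alexandroff_compactification X)"
    and "continuous_map X X T"
  shows "\<exists>(Z :: (nat \<Rightarrow> 'a option) topology) S \<iota>.
           compact_space Z \<and> metrizable_space Z \<and>
           continuous_map Z Z S \<and>
           embedding_map X Z \<iota> \<and>
           (\<forall>x\<in>topspace X. S (\<iota> x) = \<iota> (T x)) \<and>
           continuous_map Z (Alexandroff_compactification X)
             (\<lambda>z. if z \<in> \<iota> ` topspace X then Some (inv_into (topspace X) \<iota> z) else None)"
  using assms metrizable_imp_Hausdorff_space[OF assms(1)]
  by (intro exI[of _ "orbit_closure_space X T"] exI[of _ shift] exI[of _ "orbit_seq T"] conjI ballI)
    (simp_all add: compact_space_orbit_closure_space metrizable_space_orbit_closure_space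
      continuous_map_shift_orbit_closure_space embedding_map_orbit_closure_space shift_orbit_seq
      continuous_map_orbit_closure_space_projection)

end
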